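(* Let $A$ be a commutative ring. Assume that the maximal spectrum $\mathrm{Max}(A)$ is a Noetherian topological space and that $\dim \mathrm{Max}(A)\le d-2$. Then $A$ satisfies the absolute flexible stable rank condition $\mathrm{AFSR}_d$.
   Context: Here $\dim\mathrm{Max}(A)$ is the dimension of the maximal spectrum of $A$, i.e. the supremum of the lengths of chains of prime ideals each of which coincides with its Jacobson radical (an intersection of maximal ideals). A commutative ring $A$ satisfies $\mathrm{AFSR}_d$ if for any row $(b_1,\ldots,b_d)$ with coordinates in $A$, there exists $c_1\in A$ such that for any invertible $\varepsilon_1\in A^*$ there exists $c_2\in A$ such that for any $\varepsilon_2\in A^*$, $\ldots$, there exists $c_{d-1}\in A$ such that for any $\varepsilon_{d-1}\in A^*$, every maximal ideal of $A$ containing the ideal $\langle b_1+\varepsilon_1c_1b_d,\ldots,b_{d-1}+\varepsilon_{d-1}c_{d-1}b_d\rangle$ already contains the ideal $\langle b_1,\ldots,b_d\rangle$. *)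

theory Defs
  imports "HOL-Algebra.Algebra"
begin

definition MaxSpec :: "('a, 'b) ring_scheme \<Rightarrow> 'a set set" where
  "MaxSpec R = {m. maximalideal m R}"

(* Closed subsets of Max(A) in the Zariski topology: V(S) \<inter> Max(A) for S \<subseteq> A *)
definition max_closed :: "('a, 'b) ring_scheme \<Rightarrow> 'a set set \<Rightarrow> bool" where
  "max_closed R C \<longleftrightarrow> (\<exists>S \<subseteq> carrier R. C = {m \<in> MaxSpec R. S \<subseteq> m})"

definition max_noetherian :: "('a, 'b) ring_scheme \<Rightarrow> bool" where
  "max_noetherian R \<longleftrightarrow>
     (\<forall>C :: nat \<Rightarrow> 'a set set. (\<forall>n. max_closed R (C n)) \<and> (\<forall>n. C (Suc n) \<subseteq> C n)
        \<longrightarrow> (\<exists>N. \<forall>n\<ge>N. C n = C N))"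

definition jacobson_rad :: "('a, 'b) ring_scheme \<Rightarrow> 'a set \<Rightarrow> 'a set" where
  "jacobson_rad R I = carrier R \<inter> \<Inter>{m \<in> MaxSpec R. I \<subseteq> m}"

(* prime ideals coinciding with their Jacobson radical (= irreducible closed subsets of Max) *)
definition j_prime :: "('a, 'b) ring_scheme \<Rightarrow> 'a set \<Rightarrow> bool" where
  "j_prime R p \<longleftrightarrow> primeideal p R \<and> jacobson_rad R p = p"

definition dim_max_le :: "('a, 'b) ring_scheme \<Rightarrow> int \<Rightarrow> bool" where
  "dim_max_le R k \<longleftrightarrow>
     (\<forall>(p :: nat \<Rightarrow> 'a set) (n :: nat).
        (\<forall>i\<le>n. j_prime R (p i)) \<and> (\<forall>i<n. p i \<subset> p (Suc i)) \<longrightarrow> int n \<le> k)"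

(* The alternating game in AFSR_d. Row b = (b 0, ..., b (d-1)), so b_d is b (d-1).
   xs collects b_i + eps_i c_i b_d for the steps already played. *)
fun afsr_game :: "('a, 'b) ring_scheme \<Rightarrow> nat \<Rightarrow> (nat \<Rightarrow> 'a) \<Rightarrow> nat \<Rightarrow> 'a list \<Rightarrow> bool" where
  "afsr_game R d b 0 xs =
     (\<forall>m. maximalideal m R \<longrightarrow> Idl\<^bsub>R\<^esub> (set xs) \<subseteq> m \<longrightarrow> Idl\<^bsub>R\<^esub> (b ` {..<d}) \<subseteq> m)"
| "afsr_game R d b (Suc k) xs =
     (\<exists>c \<in> carrier R. \<forall>e \<in> Units R.
        afsr_game R d b k (xs @ [b (length xs) \<oplus>\<^bsub>R\<^esub> e \<otimes>\<^bsub>R\<^esub> c \<otimes>\<^bsub>R\<^esub> b (d - 1)]))"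

definition AFSR :: "('a, 'b) ring_scheme \<Rightarrow> nat \<Rightarrow> bool" where
  "AFSR R d \<longleftrightarrow> (\<forall>b. (\<forall>i<d. b i \<in> carrier R) \<longrightarrow> afsr_game R d b (d - 1) [])"

end

theory Submission
  imports Defs
begin

text \<open>
  Write f for the last entry b_d of the row and call a prime p a J-prime if it equals its
  Jacobson radical. The moves x_i = b_i + e_i c_i f are chosen so that every J-prime containing
  x_1, ..., x_i but not f is the top of a chain of J-primes of length i. Since Max(A) is
  Noetherian, the maximal ideals containing x_1, ..., x_i form a finite union of sets V(p) with
  p a J-prime; let P be the minimal such p not containing f. Prime avoidance yields c lying in
  exactly those p in P that do not contain b_(i+1); then b_(i+1) + e c f lies in no p in P,
  whatever the unit e, so every J-prime containing the next move but not f strictly contains a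
  member of P and the chain grows by one. After d - 1 moves, a maximal ideal containing all x_i
  but not f would top a chain of length d - 1 > dim Max(A); hence it contains f, and with it
  every b_i.
\<close>

abbreviation max_locus :: "('a, 'b) ring_scheme \<Rightarrow> 'a set \<Rightarrow> 'a set set" where
  "max_locus R S \<equiv> {m \<in> MaxSpec R. S \<subseteq> m}"

lemma (in ring) ideal_add_right_mem_iff:
  assumes "ideal I R" "a \<in> carrier R" "b \<in> I"
  shows "a \<oplus> b \<in> I \<longleftrightarrow> a \<in> I"
proof -
  interpret I: ideal I R by fact
  have b: "b \<in> carrier R" using assms(3) by (rule I.Icarr)
  have "a \<oplus> b \<in> I" if "a \<in> I" using that assms(3) by (rule I.a_closed)
  moreover have "a \<in> I" if "a \<oplus> b \<in> I"
  proof -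
    have "(a \<oplus> b) \<oplus> \<ominus> b \<in> I" using that assms(3) by (simp add: I.a_inv_closed)
    then show ?thesis using assms(2) b by (simp add: a_assoc r_neg)
  qed
  ultimately show ?thesis by blast
qed

lemma (in ring) ideal_add_left_mem_iff:
  assumes "ideal I R" "a \<in> I" "b \<in> carrier R"
  shows "a \<oplus> b \<in> I \<longleftrightarrow> b \<in> I"
proof -
  have "a \<in> carrier R" using assms(1,2) by (rule ideal.Icarr)
  then show ?thesis using ideal_add_right_mem_iff[OF assms(1,3,2)] assms(3) by (simp add: a_comm)
qed

lemma (in ring) primeideal_Units_notin:
  assumes "primeideal p R" "u \<in> Units R"
  shows "u \<notin> p"
proof
  interpret p: primeideal p R by fact
  assume "u \<in> p"
  then have "inv u \<otimes> u \<in> p" using assms(2) by (intro p.I_l_closed) auto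
  then have "\<one> \<in> p" using assms(2) by simp
  then show False using p.one_imp_carrier p.I_notcarr by simp
qed

lemma (in cring) maximalideal_j_prime:
  assumes "maximalideal m R"
  shows "j_prime R m"
proof -
  interpret m: maximalideal m R by fact
  have "m \<subseteq> carrier R" "m \<in> max_locus R m"
    using m.a_subset assms by (auto simp: MaxSpec_def)
  then have "jacobson_rad R m = m" unfolding jacobson_rad_def by blast
  then show ?thesis using assms maximalideal_prime by (simp add: j_prime_def)
qed

lemma (in cring) exists_in_ideals_notin_prime:
  assumes "finite G" "\<forall>p\<in>G. ideal p R" "primeideal q R" "\<forall>p\<in>G. \<not> p \<subseteq> q"
  shows "\<exists>x\<in>carrier R. (\<forall>p\<in>G. x \<in> p) \<and> x \<notin> q"
  using assms
proof (induction G rule: finite_induct)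
  case empty
  have "\<one> \<notin> q" using primeideal_Units_notin[OF empty.prems(2)] by simp
  then show ?case by blast
next
  case (insert p G)
  obtain x where x: "x \<in> carrier R" "\<forall>p\<in>G. x \<in> p" "x \<notin> q"
    using insert.IH insert.prems by blast
  obtain z where z: "z \<in> p" "z \<notin> q" using insert.prems(3) by blast
  have p: "ideal p R" using insert.prems(1) by simp
  have zc: "z \<in> carrier R" using ideal.Icarr[OF p z(1)] .
  have "x \<otimes> z \<notin> q" using primeideal.I_prime[OF insert.prems(2) x(1) zc] x(3) z(2) by blast
  moreover have "x \<otimes> z \<in> p" using ideal.I_l_closed[OF p z(1) x(1)] .
  moreover have "x \<otimes> z \<in> p'" if "p' \<in> G" for p'
    using ideal.I_r_closed[of p' R x z] insert.prems(1) that x(2) zc by simp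
  ultimately show ?case using x(1) zc by blast
qed

lemma (in cring) exists_separating_element:
  assumes "finite P" "\<forall>p\<in>P. primeideal p R" "\<forall>p\<in>P. \<forall>p'\<in>P. p \<subseteq> p' \<longrightarrow> p = p'"
    and "T \<subseteq> P"
  shows "\<exists>c\<in>carrier R. \<forall>p\<in>P. c \<in> p \<longleftrightarrow> p \<notin> T"
  using finite_subset[OF assms(4,1)] assms(4)
proof (induction T rule: finite_induct)
  case empty
  have "\<forall>p\<in>P. \<zero> \<in> p"
    using assms(2) by (blast intro: additive_subgroup.zero_closed ideal.axioms(1) primeideal.axioms(1))
  then show ?case by blast
next
  case (insert k T)
  then obtain c where c: "c \<in> carrier R" "\<forall>p\<in>P. c \<in> p \<longleftrightarrow> p \<notin> T" by auto
  have k: "k \<in> P" "primeideal k R" using insert.prems assms(2) by auto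
  have "\<forall>p\<in>P - {k}. ideal p R" "\<forall>p\<in>P - {k}. \<not> p \<subseteq> k"
    using assms(2,3) k(1) primeideal.axioms(1) by blast+
  then obtain y where y: "y \<in> carrier R" "\<forall>p\<in>P - {k}. y \<in> p" "y \<notin> k"
    using exists_in_ideals_notin_prime[of "P - {k}" k] assms(1) k(2) by blast
  have "c \<oplus> y \<in> p \<longleftrightarrow> p \<notin> insert k T" if "p \<in> P" for p
  proof (cases "p = k")
    case True
    have "c \<in> k" using c k(1) insert.hyps(2) by blast
    then show ?thesis
      using True c(1) y(1,3) ideal_add_left_mem_iff[OF primeideal.axioms(1)[OF k(2)]] by simp
  next
    case False
    then have "y \<in> p" using y(2) that by blast
    then show ?thesis
      using False c that ideal_add_right_mem_iff[OF primeideal.axioms(1)] assms(2) by simp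
  qed
  then show ?case using c y by blast
qed

lemma (in cring) exists_coefficient_avoiding_primes:
  assumes "finite P" "\<forall>p\<in>P. primeideal p R" "\<forall>p\<in>P. \<forall>p'\<in>P. p \<subseteq> p' \<longrightarrow> p = p'"
    and a: "a \<in> carrier R" and f: "f \<in> carrier R" "\<forall>p\<in>P. f \<notin> p"
  shows "\<exists>c\<in>carrier R. \<forall>e\<in>Units R. \<forall>p\<in>P. a \<oplus> e \<otimes> c \<otimes> f \<notin> p"
proof -
  obtain c where c: "c \<in> carrier R" "\<forall>p\<in>P. c \<in> p \<longleftrightarrow> a \<notin> p"
    using exists_separating_element[OF assms(1-3), of "{p \<in> P. a \<in> p}"] by auto
  have "a \<oplus> e \<otimes> c \<otimes> f \<notin> p" if e: "e \<in> Units R" and pP: "p \<in> P" for e p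
  proof -
    interpret p: primeideal p R using assms(2) pP by simp
    have ec: "e \<in> carrier R" using e by (rule Units_closed)
    have ecf: "e \<otimes> c \<otimes> f \<in> carrier R" using ec c(1) f(1) by simp
    show ?thesis
    proof (cases "a \<in> p")
      case True
      have "e \<notin> p" using primeideal_Units_notin[OF p.primeideal e] .
      moreover have "c \<notin> p" "f \<notin> p" using True c(2) f(2) pP by auto
      ultimately have "e \<otimes> c \<otimes> f \<notin> p" using p.I_prime ec c(1) f(1) by (metis m_closed)
      then show ?thesis using ideal_add_left_mem_iff[OF p.is_ideal True ecf] by simp
    next
      case False
      then have "c \<in> p" using c(2) pP by simp
      then have "e \<otimes> c \<otimes> f \<in> p" using ec f(1) by (simp add: p.I_l_closed p.I_r_closed)
      then show ?thesis using ideal_add_right_mem_iff[OF p.is_ideal a] False by simp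
    qed
  qed
  then show ?thesis using c(1) by blast
qed

lemma (in ring) ideal_jacobson_rad: "ideal (jacobson_rad R S) R"
proof -
  have "ideal (\<Inter>(insert (carrier R) (max_locus R S))) R"
    by (rule i_Intersect) (auto simp: oneideal MaxSpec_def maximalideal.axioms(1))
  then show ?thesis by (simp add: jacobson_rad_def)
qed

lemma max_locus_jacobson_rad:
  assumes "S \<subseteq> carrier R"
  shows "max_locus R (jacobson_rad R S) = max_locus R S"
  using assms unfolding jacobson_rad_def by blast

lemma jacobson_rad_idem:
  assumes "S \<subseteq> carrier R"
  shows "jacobson_rad R (jacobson_rad R S) = jacobson_rad R S"
  using max_locus_jacobson_rad[OF assms] by (simp add: jacobson_rad_def)

lemma (in cring) j_prime_contains_component:
  assumes "j_prime R q" "finite F" "\<forall>p\<in>F. ideal p R"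
    and "max_locus R q \<subseteq> (\<Union>p\<in>F. max_locus R p)"
  shows "\<exists>p\<in>F. p \<subseteq> q"
proof (rule ccontr)
  assume "\<not> ?thesis"
  moreover have "primeideal q R" using assms(1) by (simp add: j_prime_def)
  ultimately obtain x where x: "x \<in> carrier R" "\<forall>p\<in>F. x \<in> p" "x \<notin> q"
    using exists_in_ideals_notin_prime[OF assms(2,3)] by blast
  have "x \<in> m" if "m \<in> max_locus R q" for m
    using that assms(4) x(2) by blast
  then have "x \<in> jacobson_rad R q" using x(1) by (simp add: jacobson_rad_def)
  then show False using assms(1) x(3) by (simp add: j_prime_def)
qed

lemma max_noetherian_wf:
  assumes "max_noetherian R"
  shows "wf {(C', C). max_closed R C' \<and> max_closed R C \<and> C' \<subset> C}"
  unfolding wf_iff_no_infinite_down_chain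
proof (rule notI, elim exE)
  fix C :: "nat \<Rightarrow> 'a set set"
  assume "\<forall>n. (C (Suc n), C n) \<in> {(C', C). max_closed R C' \<and> max_closed R C \<and> C' \<subset> C}"
  then have C: "\<forall>n. max_closed R (C n) \<and> C (Suc n) \<subset> C n" by simp
  then have "(\<forall>n. max_closed R (C n)) \<and> (\<forall>n. C (Suc n) \<subseteq> C n)"
    by (simp add: psubset_eq)
  then have "\<exists>N. \<forall>n\<ge>N. C n = C N"
    by (rule assms[unfolded max_noetherian_def, rule_format])
  then obtain N where "\<forall>n\<ge>N. C n = C N" ..
  then have "C (Suc N) = C N" using le_Suc_eq by blast
  moreover have "C (Suc N) \<subset> C N" using C by simp
  ultimately show False by simp
qed

lemma (in cring) max_locus_split:
  assumes S: "S \<subseteq> carrier R" and "max_locus R S \<noteq> {}"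
    and not_prime: "\<not> primeideal (jacobson_rad R S) R"
  obtains a b where "a \<in> carrier R" "b \<in> carrier R"
    "max_locus R (insert a S) \<subset> max_locus R S" "max_locus R (insert b S) \<subset> max_locus R S"
    "max_locus R S = max_locus R (insert a S) \<union> max_locus R (insert b S)"
proof -
  let ?J = "jacobson_rad R S"
  obtain m0 where m0: "m0 \<in> max_locus R S" using assms(2) by blast
  have "\<one> \<notin> m0"
    using m0 primeideal_Units_notin[OF maximalideal_prime] by (simp add: MaxSpec_def)
  then have "carrier R \<noteq> ?J" using m0 by (auto simp: jacobson_rad_def)
  then have "\<not> (\<forall>a b. a \<in> carrier R \<longrightarrow> b \<in> carrier R \<longrightarrow> a \<otimes> b \<in> ?J \<longrightarrow> a \<in> ?J \<or> b \<in> ?J)"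
    using not_prime primeidealI[OF ideal_jacobson_rad is_cring] by blast
  then obtain a b where ab: "a \<in> carrier R" "b \<in> carrier R" "a \<otimes> b \<in> ?J" "a \<notin> ?J" "b \<notin> ?J"
    by blast
  have a: "max_locus R (insert a S) \<subset> max_locus R S"
    using ab(1,4) by (auto simp: jacobson_rad_def)
  have b: "max_locus R (insert b S) \<subset> max_locus R S"
    using ab(2,5) by (auto simp: jacobson_rad_def)
  have "m \<in> max_locus R (insert a S) \<union> max_locus R (insert b S)"
    if m: "m \<in> max_locus R S" for m
  proof -
    have "a \<otimes> b \<in> m" using ab(3) m by (auto simp: jacobson_rad_def)
    then have "a \<in> m \<or> b \<in> m"
      using m primeideal.I_prime[OF maximalideal_prime, of m a b] ab(1,2) by (simp add: MaxSpec_def)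
    then show ?thesis using m by auto
  qed
  then have "max_locus R S \<subseteq> max_locus R (insert a S) \<union> max_locus R (insert b S)"
    by (rule subsetI)
  moreover have "max_locus R (insert a S) \<union> max_locus R (insert b S) \<subseteq> max_locus R S"
    using a b by (intro Un_least psubset_imp_subset)
  ultimately show ?thesis using ab(1,2) a b by (intro that equalityI)
qed

lemma (in cring) max_closed_finite_union_j_prime:
  assumes "max_noetherian R" "max_closed R C"
  shows "\<exists>F. finite F \<and> (\<forall>p\<in>F. j_prime R p) \<and> C = (\<Union>p\<in>F. max_locus R p)"
  using max_noetherian_wf[OF assms(1)] assms(2)
proof (induction C rule: wf_induct_rule)
  case (less C)
  then obtain S where S: "S \<subseteq> carrier R" "C = max_locus R S" unfolding max_closed_def by blast
  let ?J = "jacobson_rad R S"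
  consider (empty) "C = {}" | (irreducible) "primeideal ?J R"
    | (reducible) "C \<noteq> {}" "\<not> primeideal ?J R" by blast
  then show ?case
  proof cases
    case empty
    then show ?thesis by (intro exI[of _ "{}"]) simp
  next
    case irreducible
    then have "j_prime R ?J" using jacobson_rad_idem[OF S(1)] by (simp add: j_prime_def)
    then show ?thesis using S(2) max_locus_jacobson_rad[OF S(1)] by (intro exI[of _ "{?J}"]) simp
  next
    case reducible
    then have "max_locus R S \<noteq> {}" using S(2) by simp
    then obtain a b where "a \<in> carrier R" "b \<in> carrier R"
      "max_locus R (insert a S) \<subset> max_locus R S" "max_locus R (insert b S) \<subset> max_locus R S"
      "max_locus R S = max_locus R (insert a S) \<union> max_locus R (insert b S)"
      using max_locus_split[OF S(1)] reducible(2) by blast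
    note ab = this[folded S(2)]
    have IH: "\<exists>F. finite F \<and> (\<forall>p\<in>F. j_prime R p) \<and> max_locus R (insert x S) = (\<Union>p\<in>F. max_locus R p)"
      if "x \<in> carrier R" "max_locus R (insert x S) \<subset> C" for x
    proof -
      have "max_closed R (max_locus R (insert x S))"
        using S(1) that(1) unfolding max_closed_def by blast
      then show ?thesis using less.IH[of "max_locus R (insert x S)"] less.prems that(2) by simp
    qed
    obtain Fa where
      "finite Fa" "\<forall>p\<in>Fa. j_prime R p" "max_locus R (insert a S) = (\<Union>p\<in>Fa. max_locus R p)"
      using IH[OF ab(1,3)] by (elim exE conjE)
    moreover obtain Fb where
      "finite Fb" "\<forall>p\<in>Fb. j_prime R p" "max_locus R (insert b S) = (\<Union>p\<in>Fb. max_locus R p)"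
      using IH[OF ab(2,4)] by (elim exE conjE)
    ultimately show ?thesis using ab(5) by (intro exI[of _ "Fa \<union> Fb"]) auto
  qed
qed

lemma (in cring) finite_minimal_j_primes_avoiding:
  assumes "max_noetherian R" "S \<subseteq> carrier R"
  obtains P where "finite P" "\<forall>p\<in>P. j_prime R p \<and> S \<subseteq> p \<and> f \<notin> p"
    "\<forall>p\<in>P. \<forall>p'\<in>P. p \<subseteq> p' \<longrightarrow> p = p'"
    "\<And>q. j_prime R q \<Longrightarrow> S \<subseteq> q \<Longrightarrow> f \<notin> q \<Longrightarrow> \<exists>p\<in>P. p \<subseteq> q"
proof -
  have closed: "max_closed R (max_locus R S)" using assms(2) unfolding max_closed_def by blast
  obtain F where F: "finite F" "\<forall>p\<in>F. j_prime R p" "max_locus R S = (\<Union>p\<in>F. max_locus R p)"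
    using max_closed_finite_union_j_prime[OF assms(1) closed] by (elim exE conjE)
  define G where "G = {p \<in> F. f \<notin> p}"
  define P where "P = {p \<in> G. \<forall>p'\<in>G. p' \<subseteq> p \<longrightarrow> p = p'}"
  have "finite G" using F(1) by (simp add: G_def)
  have S_sub: "S \<subseteq> p" if "p \<in> F" for p
  proof -
    have "S \<subseteq> m" if "m \<in> max_locus R p" for m
    proof -
      have "m \<in> (\<Union>p\<in>F. max_locus R p)" using that \<open>p \<in> F\<close> by blast
      then show ?thesis unfolding F(3)[symmetric] by simp
    qed
    then have "S \<subseteq> jacobson_rad R p"
      using assms(2) unfolding jacobson_rad_def by blast
    moreover have "jacobson_rad R p = p" using F(2) that by (simp add: j_prime_def)
    ultimately show ?thesis by simp
  qed
  have cover: "\<exists>p\<in>P. p \<subseteq> q" if q: "j_prime R q" "S \<subseteq> q" "f \<notin> q" for q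
  proof -
    have "max_locus R q \<subseteq> (\<Union>p\<in>F. max_locus R p)" unfolding F(3)[symmetric] using q(2) by blast
    then obtain p0 where "p0 \<in> F" "p0 \<subseteq> q"
      using j_prime_contains_component[OF q(1) F(1)] F(2) by (auto simp: j_prime_def primeideal.axioms(1))
    then have "p0 \<in> G" using q(3) by (auto simp: G_def)
    then obtain p where "p \<in> G" "p \<subseteq> p0" "\<forall>p'\<in>G. p' \<subseteq> p \<longrightarrow> p = p'"
      using finite_has_minimal2[OF \<open>finite G\<close>] by blast
    then show ?thesis using \<open>p0 \<subseteq> q\<close> by (auto simp: P_def)
  qed
  have "finite P" using \<open>finite G\<close> by (simp add: P_def)
  moreover have "\<forall>p\<in>P. j_prime R p \<and> S \<subseteq> p \<and> f \<notin> p" using F(2) S_sub by (auto simp: P_def G_def)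
  moreover have "\<forall>p\<in>P. \<forall>p'\<in>P. p \<subseteq> p' \<longrightarrow> p = p'" by (auto simp: P_def)
  ultimately show ?thesis using cover by (rule that)
qed

definition j_height_ge :: "('a, 'b) ring_scheme \<Rightarrow> 'a set \<Rightarrow> nat \<Rightarrow> bool" where
  "j_height_ge R q n \<longleftrightarrow>
     (\<exists>p. (\<forall>i\<le>n. j_prime R (p i)) \<and> (\<forall>i<n. p i \<subset> p (Suc i)) \<and> p n = q)"

lemma j_height_ge_0: "j_prime R q \<Longrightarrow> j_height_ge R q 0"
  unfolding j_height_ge_def by (intro exI[of _ "\<lambda>_. q"]) simp

lemma j_height_ge_Suc:
  assumes "j_height_ge R p n" "p \<subset> q" "j_prime R q"
  shows "j_height_ge R q (Suc n)"
proof -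
  obtain ch where ch: "\<forall>i\<le>n. j_prime R (ch i)" "\<forall>i<n. ch i \<subset> ch (Suc i)" "ch n = p"
    using assms(1) unfolding j_height_ge_def by blast
  let ?ch = "ch(Suc n := q)"
  have "\<forall>i\<le>Suc n. j_prime R (?ch i)" using ch(1) assms(3) by (simp add: le_Suc_eq)
  moreover have "\<forall>i<Suc n. ?ch i \<subset> ?ch (Suc i)" using ch(2,3) assms(2) by (auto simp: less_Suc_eq)
  ultimately show ?thesis unfolding j_height_ge_def by (intro exI[of _ ?ch]) simp
qed

lemma dim_max_le_j_height_ge:
  assumes "dim_max_le R k" "j_height_ge R q n"
  shows "int n \<le> k"
  using assms unfolding dim_max_le_def j_height_ge_def by blast

definition afsr_invariant :: "('a, 'b) ring_scheme \<Rightarrow> nat \<Rightarrow> (nat \<Rightarrow> 'a) \<Rightarrow> 'a list \<Rightarrow> bool" where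
  "afsr_invariant R d b xs \<longleftrightarrow> set xs \<subseteq> carrier R \<and>
     (\<forall>j<length xs. \<exists>y\<in>carrier R. xs ! j = b j \<oplus>\<^bsub>R\<^esub> y \<otimes>\<^bsub>R\<^esub> b (d - 1)) \<and>
     (\<forall>q. j_prime R q \<and> set xs \<subseteq> q \<and> b (d - 1) \<notin> q \<longrightarrow> j_height_ge R q (length xs))"

lemma afsr_invariant_Nil: "afsr_invariant R d b []"
  unfolding afsr_invariant_def by (simp add: j_height_ge_0)

context cring
begin

lemma afsr_invariant_snoc:
  assumes "max_noetherian R" "\<forall>i<d. b i \<in> carrier R"
    and inv: "afsr_invariant R d b xs" and len: "length xs < d - 1"
  shows "\<exists>c\<in>carrier R. \<forall>e\<in>Units R. afsr_invariant R d b (xs @ [b (length xs) \<oplus> e \<otimes> c \<otimes> b (d - 1)])"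
proof -
  let ?f = "b (d - 1)" and ?a = "b (length xs)"
  have f: "?f \<in> carrier R" and a: "?a \<in> carrier R" using assms(2) len by auto
  have xs: "set xs \<subseteq> carrier R" "\<forall>j<length xs. \<exists>y\<in>carrier R. xs ! j = b j \<oplus> y \<otimes> ?f"
    "\<And>q. j_prime R q \<Longrightarrow> set xs \<subseteq> q \<Longrightarrow> ?f \<notin> q \<Longrightarrow> j_height_ge R q (length xs)"
    using inv unfolding afsr_invariant_def by blast+
  obtain P where P: "finite P" "\<forall>p\<in>P. j_prime R p \<and> set xs \<subseteq> p \<and> ?f \<notin> p"
    "\<forall>p\<in>P. \<forall>p'\<in>P. p \<subseteq> p' \<longrightarrow> p = p'"
    "\<And>q. j_prime R q \<Longrightarrow> set xs \<subseteq> q \<Longrightarrow> ?f \<notin> q \<Longrightarrow> \<exists>p\<in>P. p \<subseteq> q"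
    using finite_minimal_j_primes_avoiding[OF assms(1) xs(1)] by blast
  have "\<forall>p\<in>P. primeideal p R" using P(2) by (simp add: j_prime_def)
  then obtain c where c: "c \<in> carrier R" "\<forall>e\<in>Units R. \<forall>p\<in>P. ?a \<oplus> e \<otimes> c \<otimes> ?f \<notin> p"
    using exists_coefficient_avoiding_primes[OF P(1) _ P(3) a f] P(2) by blast
  have "afsr_invariant R d b (xs @ [?a \<oplus> e \<otimes> c \<otimes> ?f])" if e: "e \<in> Units R" for e
  proof -
    let ?x = "?a \<oplus> e \<otimes> c \<otimes> ?f"
    have ec: "e \<otimes> c \<in> carrier R" using Units_closed[OF e] c(1) by simp
    have "j_height_ge R q (Suc (length xs))"
      if q: "j_prime R q" "set xs \<subseteq> q" "?x \<in> q" "?f \<notin> q" for q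
    proof -
      obtain p where p: "p \<in> P" "p \<subseteq> q" using P(4) q(1,2,4) by blast
      then have "p \<subset> q" using c(2) e q(3) by blast
      moreover have "j_height_ge R p (length xs)" using xs(3) P(2) p(1) by blast
      ultimately show ?thesis using j_height_ge_Suc q(1) by blast
    qed
    moreover have "\<exists>y\<in>carrier R. (xs @ [?x]) ! j = b j \<oplus> y \<otimes> ?f" if "j < Suc (length xs)" for j
      using xs(2) that ec by (cases "j < length xs") (auto simp: nth_append less_Suc_eq)
    ultimately show ?thesis
      using xs(1) a ec f unfolding afsr_invariant_def by auto
  qed
  then show ?thesis using c(1) by blast
qed

lemma afsr_invariant_maximalideal:
  assumes dim: "dim_max_le R (int d - 2)" and b: "\<forall>i<d. b i \<in> carrier R"
    and inv: "afsr_invariant R d b xs" and len: "length xs = d - 1"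
    and m: "maximalideal m R" "set xs \<subseteq> m" and j: "j < d"
  shows "b j \<in> m"
proof -
  interpret m: maximalideal m R by fact
  have f_m: "b (d - 1) \<in> m"
  proof (rule ccontr)
    assume "b (d - 1) \<notin> m"
    moreover have "j_prime R m" using m(1) by (rule maximalideal_j_prime)
    ultimately have "j_height_ge R m (length xs)"
      using inv m(2) unfolding afsr_invariant_def by blast
    then have "int (length xs) \<le> int d - 2" by (rule dim_max_le_j_height_ge[OF dim])
    then show False using len j by linarith
  qed
  show ?thesis
  proof (cases "j = d - 1")
    case True
    then show ?thesis using f_m by simp
  next
    case False
    then have "j < length xs" using j len by simp
    then obtain y where y: "y \<in> carrier R" "xs ! j = b j \<oplus> y \<otimes> b (d - 1)"
      using inv unfolding afsr_invariant_def by blast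
    have "xs ! j \<in> m" using m(2) \<open>j < length xs\<close> nth_mem by blast
    moreover have "y \<otimes> b (d - 1) \<in> m" using f_m y(1) by (rule m.I_l_closed)
    ultimately show ?thesis using ideal_add_right_mem_iff[OF m.is_ideal] b j y by simp
  qed
qed

lemma afsr_game_if_invariant:
  assumes "max_noetherian R" "dim_max_le R (int d - 2)" "\<forall>i<d. b i \<in> carrier R"
  shows "length xs + k = d - 1 \<Longrightarrow> afsr_invariant R d b xs \<Longrightarrow> afsr_game R d b k xs"
proof (induction k arbitrary: xs)
  case 0
  show ?case unfolding afsr_game.simps
  proof (intro allI impI)
    fix m assume m: "maximalideal m R" "Idl (set xs) \<subseteq> m"
    have xs: "set xs \<subseteq> carrier R" using "0.prems"(2) by (simp add: afsr_invariant_def)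
    have "b ` {..<d} \<subseteq> m"
      using afsr_invariant_maximalideal[OF assms(2,3) "0.prems"(2) _ m(1)] "0.prems"(1)
        genideal_self[OF xs] m(2) by auto
    then show "Idl (b ` {..<d}) \<subseteq> m"
      using genideal_minimal[OF maximalideal.axioms(1)[OF m(1)]] by blast
  qed
next
  case (Suc k)
  then have "length xs < d - 1" by simp
  then obtain c where c: "c \<in> carrier R"
    "\<forall>e\<in>Units R. afsr_invariant R d b (xs @ [b (length xs) \<oplus> e \<otimes> c \<otimes> b (d - 1)])"
    using afsr_invariant_snoc[OF assms(1,3) Suc.prems(2)] by blast
  have "afsr_game R d b k (xs @ [b (length xs) \<oplus> e \<otimes> c \<otimes> b (d - 1)])" if "e \<in> Units R" for e
    using Suc.IH Suc.prems(1) c(2) that by simp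
  then show ?case using c(1) by auto
qed

end

theorem lemma2:
  fixes R :: "('a, 'b) ring_scheme" and d :: nat
  assumes "cring R"
    and "max_noetherian R"
    and "dim_max_le R (int d - 2)"
  shows "AFSR R d"
proof -
  interpret cring R by fact
  show ?thesis
    unfolding AFSR_def
  proof (intro allI impI)
    fix b :: "nat \<Rightarrow> 'a"
    assume "\<forall>i<d. b i \<in> carrier R"
    then show "afsr_game R d b (d - 1) []"
      by (rule afsr_game_if_invariant[OF assms(2,3)]) (simp_all add: afsr_invariant_Nil)
  qed
qed

end
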